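(* Consider the Waterfilling Mechanism (with exact bucketing) described in the context. Let $S$ be any nonempty finite set of analysts and let $j \notin S$ be a further analyst, each analyst $l$ having a workload $W_l \in \mathbb{R}^{m_l\times n}$, a weight $s_l>0$ and a selected strategy matrix $A_l$ satisfying $W_l = W_l A_l^+ A_l$ and having every column of $A_l$ of $L_1$ norm $1$. Then for every analyst $i \in S$, $$\mathrm{Err}_i\big(S\cup\{j\}\big) \le \mathrm{Err}_i(S),$$ i.e. adding an analyst to the collective cannot increase the expected error of any analyst.
   Context: Data are a vector $x\in\mathbb{R}^n$. Fix $\varepsilon>0$. Each analyst $l$ has a workload matrix $W_l$ (a set of linear queries), a weight $s_l>0$ (analyst $l$ is entitled to privacy budget $s_l\varepsilon$), and a strategy matrix $A_l$ produced for $W_l$ alone by a selection step (it depends only on $W_l$), satisfying $W_l = W_lA_l^+A_l$ (where $^+$ denotes the Moore–Penrose pseudo-inverse) and every column of $A_l$ having $L_1$ norm $1$. Fix a norm $\|\cdot\|$ on row vectors. Waterfilling Mechanism for a collective $S$ of analysts: maintain a set $B$ of buckets, each a unit vector $e$ with a weight $f_B(e)>0$, initially empty. For each $l\in S$ and each nonzero row $v$ of $s_lA_l$, let $e=v/\|v\|$; if $e\in B$, increase $f_B(e)$ by $\|v\|$, otherwise add $e$ to $B$ with $f_B(e)=\|v\|$. The joint strategy $A$ has one row $f_B(e)\,e$ for each $e\in B$. With total budget $\varepsilon_S=\big(\sum_{l\in S}s_l\big)\varepsilon$, the mechanism releases $y=Ax+\eta$ where $\eta$ has i.i.d. Laplace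 entries of scale $\|A\|_1/\varepsilon_S$, with $\|A\|_1$ the maximum $L_1$ norm of a column of $A$ (the $L_1$ sensitivity). Analyst $i$ estimates $W_ix$ by $W_iA^+y$. The expected error of analyst $i$ in collective $S$ is $\mathrm{Err}_i(S)=\mathbb{E}\|W_ix-W_iA^+y\|_2^2 = \frac{2\|A\|_1^2}{\varepsilon_S^2}\|W_iA^+\|_F^2$. *)

theory Defs
  imports "Jordan_Normal_Form.Matrix"
begin

definition is_pinv :: "real mat \<Rightarrow> real mat \<Rightarrow> bool" where
  "is_pinv A X \<longleftrightarrow> X \<in> carrier_mat (dim_col A) (dim_row A)
     \<and> A * X * A = A \<and> X * A * X = X
     \<and> transpose_mat (A * X) = A * X \<and> transpose_mat (X * A) = X * A"

definition pinv :: "real mat \<Rightarrow> real mat" where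
  "pinv A = (THE X. is_pinv A X)"

definition col_L1 :: "real mat \<Rightarrow> nat \<Rightarrow> real" where
  "col_L1 M c = (\<Sum>r<dim_row M. \<bar>M $$ (r, c)\<bar>)"

definition L1_sens :: "real mat \<Rightarrow> real" where
  "L1_sens M = Max {col_L1 M c | c. c < dim_col M}"

definition frob_sq :: "real mat \<Rightarrow> real" where
  "frob_sq M = (\<Sum>r<dim_row M. \<Sum>c<dim_col M. (M $$ (r, c))\<^sup>2)"

definition is_row_norm :: "nat \<Rightarrow> (real vec \<Rightarrow> real) \<Rightarrow> bool" where
  "is_row_norm n N \<longleftrightarrow>
     (\<forall>v \<in> carrier_vec n. 0 \<le> N v \<and> (N v = 0 \<longleftrightarrow> v = 0\<^sub>v n)) \<and>
     (\<forall>v \<in> carrier_vec n. \<forall>c. N (c \<cdot>\<^sub>v v) = \<bar>c\<bar> * N v) \<and>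
     (\<forall>u \<in> carrier_vec n. \<forall>v \<in> carrier_vec n. N (u + v) \<le> N u + N v)"

definition wf_rows :: "('a \<Rightarrow> real) \<Rightarrow> ('a \<Rightarrow> real mat) \<Rightarrow> 'a set \<Rightarrow> ('a \<times> nat) set" where
  "wf_rows s A S = {(l, k). l \<in> S \<and> k < dim_row (A l)
       \<and> row (s l \<cdot>\<^sub>m A l) k \<noteq> 0\<^sub>v (dim_col (A l))}"

definition wf_vec :: "('a \<Rightarrow> real) \<Rightarrow> ('a \<Rightarrow> real mat) \<Rightarrow> 'a \<times> nat \<Rightarrow> real vec" where
  "wf_vec s A p = row (s (fst p) \<cdot>\<^sub>m A (fst p)) (snd p)"

definition wf_dir :: "(real vec \<Rightarrow> real) \<Rightarrow> ('a \<Rightarrow> real) \<Rightarrow> ('a \<Rightarrow> real mat) \<Rightarrow> 'a \<times> nat \<Rightarrow> real vec" where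
  "wf_dir N s A p = (1 / N (wf_vec s A p)) \<cdot>\<^sub>v wf_vec s A p"

definition wf_buckets :: "(real vec \<Rightarrow> real) \<Rightarrow> ('a \<Rightarrow> real) \<Rightarrow> ('a \<Rightarrow> real mat) \<Rightarrow> 'a set \<Rightarrow> real vec set" where
  "wf_buckets N s A S = wf_dir N s A ` wf_rows s A S"

definition wf_weight :: "(real vec \<Rightarrow> real) \<Rightarrow> ('a \<Rightarrow> real) \<Rightarrow> ('a \<Rightarrow> real mat) \<Rightarrow> 'a set \<Rightarrow> real vec \<Rightarrow> real" where
  "wf_weight N s A S e = (\<Sum>p \<in> {p \<in> wf_rows s A S. wf_dir N s A p = e}. N (wf_vec s A p))"

text \<open>Joint strategy: one row f_B(e) e per bucket e (in some fixed enumeration of B;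
  the error is independent of the row order).\<close>
definition joint_strategy :: "nat \<Rightarrow> (real vec \<Rightarrow> real) \<Rightarrow> ('a \<Rightarrow> real) \<Rightarrow> ('a \<Rightarrow> real mat) \<Rightarrow> 'a set \<Rightarrow> real mat" where
  "joint_strategy n N s A S =
     (let es = (SOME es. distinct es \<and> set es = wf_buckets N s A S)
      in mat_of_rows n (map (\<lambda>e. wf_weight N s A S e \<cdot>\<^sub>v e) es))"

definition wf_err :: "nat \<Rightarrow> (real vec \<Rightarrow> real) \<Rightarrow> real \<Rightarrow> ('a \<Rightarrow> real) \<Rightarrow> ('a \<Rightarrow> real mat)
      \<Rightarrow> ('a \<Rightarrow> real mat) \<Rightarrow> 'a set \<Rightarrow> 'a \<Rightarrow> real" where
  "wf_err n N \<epsilon> s W A S i =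
     (let AJ = joint_strategy n N s A S; \<epsilon>S = (\<Sum>l\<in>S. s l) * \<epsilon>
      in 2 * (L1_sens AJ)\<^sup>2 / \<epsilon>S\<^sup>2 * frob_sq (W i * pinv AJ))"

end

theory Submission
  imports Defs
begin

text \<open>Every row of the joint strategy \<open>A\<^sub>S\<close> is a bucket direction \<open>e\<close> scaled by its weight
  \<open>f\<^sub>S(e)\<close>, and weights only grow when analysts join: \<open>f\<^sub>S(e) \<le> f\<^sub>T(e)\<close> for \<open>S \<subseteq> T\<close>.
  Hence \<open>A\<^sub>S = D A\<^sub>T\<close>, where distinct rows of \<open>D\<close> have disjoint supports and each row of \<open>D\<close>
  has a single entry \<open>f\<^sub>S(e) / f\<^sub>T(e) \<le> 1\<close>, so multiplication by \<open>D\<close> does not increase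
  Frobenius norms. As every column of every \<open>A\<^sub>l\<close> has L1 norm 1, every column of \<open>A\<^sub>S\<close> has
  L1 norm \<open>\<Sum>l\<in>S. s l\<close>; the noise factor \<open>2 L1(A\<^sub>S)\<^sup>2 / \<epsilon>\<^sub>S\<^sup>2\<close> is therefore \<open>2 / \<epsilon>\<^sup>2\<close> for every
  collective, and \<open>Err\<^sub>i(S) = 2 / \<epsilon>\<^sup>2 \<parallel>W\<^sub>i A\<^sub>S\<^sup>+\<parallel>\<^sub>F\<^sup>2\<close>. The rows of \<open>A\<^sub>i\<close> are multiples of rows
  of \<open>A\<^sub>S\<close>, so \<open>W\<^sub>i = W\<^sub>i A\<^sub>i\<^sup>+ A\<^sub>i\<close> lies in the row space of \<open>A\<^sub>S\<close> and
  \<open>W\<^sub>i = Y A\<^sub>S = (Y D) A\<^sub>T\<close> with \<open>Y = W\<^sub>i A\<^sub>S\<^sup>+\<close>. Finally \<open>W\<^sub>i A\<^sub>T\<^sup>+\<close> is the solution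
  of \<open>X A\<^sub>T = W\<^sub>i\<close> of least Frobenius norm, whence
  \<open>\<parallel>W\<^sub>i A\<^sub>T\<^sup>+\<parallel>\<^sub>F \<le> \<parallel>Y D\<parallel>\<^sub>F \<le> \<parallel>Y\<parallel>\<^sub>F = \<parallel>W\<^sub>i A\<^sub>S\<^sup>+\<parallel>\<^sub>F\<close>.\<close>

section \<open>Orthogonal projections and the Moore--Penrose inverse\<close>

definition outer_prod :: "real vec \<Rightarrow> real vec \<Rightarrow> real mat" where
  "outer_prod u v = mat (dim_vec u) (dim_vec v) (\<lambda>(i, j). u $ i * v $ j)"

lemma outer_prod_carrier [simp]:
    "u \<in> carrier_vec m \<Longrightarrow> v \<in> carrier_vec k \<Longrightarrow> outer_prod u v \<in> carrier_mat m k"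
  and outer_prod_dim [simp]: "dim_row (outer_prod u v) = dim_vec u" "dim_col (outer_prod u v) = dim_vec v"
  and index_outer_prod [simp]:
    "i < dim_vec u \<Longrightarrow> j < dim_vec v \<Longrightarrow> outer_prod u v $$ (i, j) = u $ i * v $ j"
  unfolding outer_prod_def by auto

lemma outer_prod_zero [simp]: "outer_prod (0\<^sub>v m) v = 0\<^sub>m m (dim_vec v)"
  by (intro eq_matI) auto

lemma mult_outer_prod:
  assumes "M \<in> carrier_mat r m" "u \<in> carrier_vec m"
  shows "M * outer_prod u v = outer_prod (M *\<^sub>v u) v"
  using assms by (intro eq_matI) (auto simp: scalar_prod_def sum_distrib_right mult.assoc)

lemma outer_prod_mult_vec:
  assumes "v \<in> carrier_vec k" "x \<in> carrier_vec k"
  shows "outer_prod u v *\<^sub>v x = (v \<bullet> x) \<cdot>\<^sub>v u"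
  using assms by (intro eq_vecI) (auto simp: scalar_prod_def sum_distrib_left ac_simps)

definition orth_proj :: "real mat \<Rightarrow> bool" where
  "orth_proj P \<longleftrightarrow> transpose_mat P = P \<and> P * P = P"

lemma orth_proj_add:
  assumes P: "P \<in> carrier_mat m m" "orth_proj P" and Q: "Q \<in> carrier_mat m m" "orth_proj Q"
    and PQ: "P * Q = 0\<^sub>m m m"
  shows "orth_proj (P + Q)"
proof -
  have QP: "Q * P = 0\<^sub>m m m"
    using arg_cong[OF PQ, of transpose_mat] P Q by (simp add: transpose_mult[of P m m Q m] orth_proj_def)
  have "(P + Q) * (P + Q) = P * (P + Q) + Q * (P + Q)"
    using P Q by (intro add_mult_distrib_mat) auto
  also have "\<dots> = P * P + P * Q + (Q * P + Q * Q)"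
    using P Q by (simp add: mult_add_distrib_mat)
  also have "\<dots> = P + Q" using P Q PQ QP by (simp add: orth_proj_def)
  finally show ?thesis using P Q by (simp add: orth_proj_def transpose_add)
qed

lemma self_scalar_prod_pos:
  fixes w :: "real vec"
  assumes "w \<in> carrier_vec m" "w \<noteq> 0\<^sub>v m"
  shows "w \<bullet> w > 0"
proof -
  obtain i where i: "i < m" "w $ i \<noteq> 0" using assms by (metis carrier_vecD eq_vecI index_zero_vec)
  have "0 < (w $ i)\<^sup>2" using i by simp
  also have "\<dots> \<le> (\<Sum>l\<in>{0..<m}. (w $ l)\<^sup>2)" using i by (intro member_le_sum) auto
  also have "\<dots> = w \<bullet> w" using assms by (simp add: scalar_prod_def power2_eq_square)
  finally show ?thesis .
qed

lemma self_scalar_prod_nonneg: "0 \<le> (v :: real vec) \<bullet> v"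
  by (simp add: scalar_prod_def sum_nonneg)

lemma orth_proj_outer_prod:
  assumes w: "w \<in> carrier_vec m" "w \<noteq> 0\<^sub>v m"
  shows "orth_proj (outer_prod w ((1 / (w \<bullet> w)) \<cdot>\<^sub>v w))"
proof -
  define u where "u = (1 / (w \<bullet> w)) \<cdot>\<^sub>v w"
  have u: "u \<in> carrier_vec m" using w by (simp add: u_def)
  have "u \<bullet> w = 1" using self_scalar_prod_pos[OF w] w by (simp add: u_def)
  then have "outer_prod w u *\<^sub>v w = w" using w u by (simp add: outer_prod_mult_vec)
  then have "outer_prod w u * outer_prod w u = outer_prod w u"
    using mult_outer_prod[of "outer_prod w u" m m w u] w u by simp
  moreover have "transpose_mat (outer_prod w u) = outer_prod w u"
    using w by (intro eq_matI) (auto simp: u_def)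
  ultimately show ?thesis by (simp add: orth_proj_def u_def)
qed

lemma orth_proj_kernel_orthogonal:
  assumes P: "P \<in> carrier_mat m m" "orth_proj P" and b: "b \<in> carrier_vec m" "P *\<^sub>v b = b"
    and w: "w \<in> carrier_vec m" "P *\<^sub>v w = 0\<^sub>v m"
  shows "w \<bullet> b = 0"
proof -
  have "w \<bullet> b = (transpose_mat P *\<^sub>v w) \<bullet> b"
    using transpose_vec_mult_scalar[OF P(1) b(1) w(1)] b(2) by simp
  then show ?thesis using P w b by (simp add: orth_proj_def)
qed

lemma orth_proj_extend:
  assumes P: "P \<in> carrier_mat m m" "orth_proj P" and a: "a \<in> carrier_vec m"
    and w_eq: "w = a - P *\<^sub>v a" and w_nz: "w \<noteq> 0\<^sub>v m"
  defines "Q \<equiv> P + outer_prod w ((1 / (w \<bullet> w)) \<cdot>\<^sub>v w)"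
  shows "orth_proj Q" "Q *\<^sub>v a = a" "\<And>b. b \<in> carrier_vec m \<Longrightarrow> P *\<^sub>v b = b \<Longrightarrow> Q *\<^sub>v b = b"
proof -
  define u where "u = (1 / (w \<bullet> w)) \<cdot>\<^sub>v w"
  have w: "w \<in> carrier_vec m" using P a by (simp add: w_eq)
  have u: "u \<in> carrier_vec m" using w by (simp add: u_def)
  have Pw: "P *\<^sub>v w = 0\<^sub>v m"
    using P a by (simp add: w_eq mult_minus_distrib_mat_vec orth_proj_def[of P] flip: assoc_mult_mat_vec)
  show "orth_proj Q"
    unfolding Q_def u_def[symmetric]
  proof (rule orth_proj_add[OF P])
    show "orth_proj (outer_prod w u)" unfolding u_def by (rule orth_proj_outer_prod[OF w w_nz])
    show "P * outer_prod w u = 0\<^sub>m m m" using Pw u by (simp add: mult_outer_prod[OF P(1) w])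
  qed (use w u in simp)
  have Q_mult: "Q *\<^sub>v b = P *\<^sub>v b + (u \<bullet> b) \<cdot>\<^sub>v w" if "b \<in> carrier_vec m" for b
    using P w u that by (simp add: Q_def u_def[symmetric] add_mult_distrib_mat_vec outer_prod_mult_vec)
  have "w \<bullet> (P *\<^sub>v a) = 0"
    using orth_proj_kernel_orthogonal[OF P _ _ w Pw] P a by (simp add: orth_proj_def flip: assoc_mult_mat_vec)
  moreover have "w \<bullet> w = w \<bullet> a - w \<bullet> (P *\<^sub>v a)"
    using scalar_prod_minus_distrib[OF w a, of "P *\<^sub>v a"] P a by (simp flip: w_eq)
  ultimately have "u \<bullet> a = 1" using self_scalar_prod_pos[OF w w_nz] w a by (simp add: u_def)
  then show "Q *\<^sub>v a = a" using Q_mult[OF a] P a by (intro eq_vecI) (auto simp: w_eq)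
  show "Q *\<^sub>v b = b" if b: "b \<in> carrier_vec m" "P *\<^sub>v b = b" for b
  proof -
    have "u \<bullet> b = 0" using orth_proj_kernel_orthogonal[OF P b w Pw] w b by (simp add: u_def)
    then show ?thesis using Q_mult[OF b(1)] b w by (auto intro!: eq_vecI)
  qed
qed

text \<open>Gram--Schmidt, one column at a time. The projection is kept in the form \<open>A * X\<close>, so that
  its range stays inside the column space of \<open>A\<close>; as \<open>A *\<^sub>v unit_vec n k = col A k\<close>, the update
  of \<open>X\<close> below turns \<open>A * X\<close> into the projection of \<open>orth_proj_extend\<close>.\<close>
lemma exists_col_space_proj:
  assumes A: "A \<in> carrier_mat m n" and "k \<le> n"
  shows "\<exists>X \<in> carrier_mat n m. orth_proj (A * X) \<and> (\<forall>c<k. A * X *\<^sub>v col A c = col A c)"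
  using \<open>k \<le> n\<close>
proof (induction k)
  case 0
  show ?case using A by (intro bexI[of _ "0\<^sub>m n m"]) (auto simp: orth_proj_def)
next
  case (Suc k)
  then obtain X where X: "X \<in> carrier_mat n m" and proj: "orth_proj (A * X)"
    and fix_cols: "\<forall>c<k. A * X *\<^sub>v col A c = col A c" by auto
  define P a where "P = A * X" and "a = col A k"
  define w where "w = a - P *\<^sub>v a"
  have P: "P \<in> carrier_mat m m" and a: "a \<in> carrier_vec m" and cols: "\<And>c. col A c \<in> carrier_vec m"
    using A X by (auto simp: P_def a_def)
  show ?case
  proof (cases "w = 0\<^sub>v m")
    case True
    have "P *\<^sub>v a = a"
    proof (rule eq_vecI)
      fix i assume "i < dim_vec a"
      then have "w $ i = 0" using True a by simp
      then show "(P *\<^sub>v a) $ i = a $ i" using \<open>i < dim_vec a\<close> a P unfolding w_def by simp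
    qed (use P a in simp)
    then show ?thesis using X proj fix_cols less_Suc_eq by (auto simp: P_def a_def)
  next
    case False
    define u where "u = (1 / (w \<bullet> w)) \<cdot>\<^sub>v w"
    define X' where "X' = X + outer_prod (unit_vec n k - X *\<^sub>v a) u"
    have u: "u \<in> carrier_vec m" using P a by (simp add: u_def w_def)
    have "A *\<^sub>v unit_vec n k = a"
      using A Suc.prems by (intro eq_vecI) (auto simp: a_def scalar_prod_def if_distrib cong: if_cong)
    then have "A * X' = P + outer_prod w u"
      using A X a u by (simp add: X'_def P_def w_def mult_add_distrib_mat mult_outer_prod
          mult_minus_distrib_mat_vec)
    moreover have "X' \<in> carrier_mat n m" using X a u by (simp add: X'_def)
    ultimately show ?thesis
      using orth_proj_extend[OF P proj[folded P_def] a w_def False] fix_cols cols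
      by (intro bexI[of _ X']) (auto simp: u_def a_def P_def less_Suc_eq)
  qed
qed

lemma exists_orth_proj_inverse:
  assumes A: "A \<in> carrier_mat m n"
  shows "\<exists>X \<in> carrier_mat n m. orth_proj (A * X) \<and> A * X * A = A"
proof -
  obtain X where X: "X \<in> carrier_mat n m" and proj: "orth_proj (A * X)"
    and fix_cols: "\<forall>c<n. A * X *\<^sub>v col A c = col A c"
    using exists_col_space_proj[OF A order.refl] by blast
  have "col (A * X * A) c = col A c" if "c < n" for c
    using col_mult2[of "A * X" m m A n c] A X fix_cols that by simp
  then have "A * X * A = A" using A X by (intro mat_col_eqI) auto
  then show ?thesis using X proj by blast
qed

lemma exists_row_space_proj:
  assumes A: "A \<in> carrier_mat m n"
  shows "\<exists>Z \<in> carrier_mat m n. orth_proj (transpose_mat Z * A) \<and> A * (transpose_mat Z * A) = A"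
proof -
  obtain Z where Z: "Z \<in> carrier_mat m n" and proj: "orth_proj (transpose_mat A * Z)"
    and AZA: "transpose_mat A * Z * transpose_mat A = transpose_mat A"
    using exists_orth_proj_inverse[of "transpose_mat A"] A by auto
  define Q where "Q = transpose_mat A * Z"
  have Q: "Q \<in> carrier_mat n n" using A Z by (simp add: Q_def)
  have Q_sym: "transpose_mat Q = Q" using proj by (simp add: Q_def orth_proj_def)
  have "A = transpose_mat (Q * transpose_mat A)" using AZA by (simp add: Q_def)
  also have "\<dots> = A * Q" using A Q_sym by (simp add: transpose_mult[OF Q, of _ m])
  finally have AQ: "A * Q = A" by simp
  have "Q = transpose_mat Z * A"
    using A Z Q_sym by (simp add: Q_def transpose_mult[of _ n m Z n])
  then show ?thesis using Z proj AQ by (auto simp flip: Q_def)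
qed

text \<open>The witness is \<open>Q * X0\<close>, where \<open>A * X0\<close> projects onto the column space
  and \<open>Q\<close> onto the row space of \<open>A\<close>.\<close>
lemma pinv_exists: "\<exists>X. is_pinv A X"
proof -
  define m n where "m = dim_row A" and "n = dim_col A"
  have A: "A \<in> carrier_mat m n" by (simp add: m_def n_def)
  obtain X0 where X0: "X0 \<in> carrier_mat n m" and proj0: "orth_proj (A * X0)"
    and AXA: "A * X0 * A = A" using exists_orth_proj_inverse[OF A] by blast
  obtain Z where Z: "Z \<in> carrier_mat m n" and projQ: "orth_proj (transpose_mat Z * A)"
    and AQ: "A * (transpose_mat Z * A) = A" using exists_row_space_proj[OF A] by blast
  define Q where "Q = transpose_mat Z * A"
  have Zt: "transpose_mat Z \<in> carrier_mat n m" and Q: "Q \<in> carrier_mat n n" using A Z by (simp_all add: Q_def)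
  define X where "X = Q * X0"
  have X: "X \<in> carrier_mat n m" using Q X0 by (simp add: X_def)
  have "A * X = A * Q * X0" using A Q X0 by (simp add: X_def)
  then have AX: "A * X = A * X0" by (simp add: AQ[folded Q_def])
  have "X * A = transpose_mat Z * (A * X0 * A)"
    unfolding X_def Q_def
    by (simp only: assoc_mult_mat[OF Zt A X0] assoc_mult_mat[OF Zt mult_carrier_mat[OF A X0] A])
  then have XA: "X * A = Q" by (simp add: AXA Q_def)
  have "X * A * X = Q * Q * X0" unfolding XA using Q X0 by (simp add: X_def)
  also have "\<dots> = X" using projQ by (simp add: X_def orth_proj_def flip: Q_def)
  finally have XAX: "X * A * X = X" .
  have "is_pinv A X"
    unfolding is_pinv_def using X AX XA XAX AXA proj0 projQ
    by (simp add: m_def[symmetric] n_def[symmetric] orth_proj_def flip: Q_def)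
  then show ?thesis ..
qed

lemma is_pinv_carrier:
  assumes "is_pinv A X" "A \<in> carrier_mat m n"
  shows "X \<in> carrier_mat n m"
  using assms unfolding is_pinv_def by auto

lemma is_pinv_mult_right_eq:
  assumes X: "is_pinv A X" and Y: "is_pinv A Y"
  shows "A * X = A * Y"
proof -
  obtain m n where A: "A \<in> carrier_mat m n" using carrier_mat_triv by blast
  have Xc: "X \<in> carrier_mat n m" and Yc: "Y \<in> carrier_mat n m"
    using is_pinv_carrier X Y A by blast+
  have "A * X = A * Y * A * X" using Y by (simp add: is_pinv_def)
  also have "\<dots> = (A * Y) * (A * X)" by (rule assoc_mult_mat[OF mult_carrier_mat[OF A Yc] A Xc])
  also have "\<dots> = transpose_mat (A * Y) * transpose_mat (A * X)" using X Y by (simp add: is_pinv_def)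
  also have "\<dots> = transpose_mat (A * X * (A * Y))"
    by (rule transpose_mult[symmetric]) (use A Xc Yc in auto)
  also have "\<dots> = transpose_mat (A * X * A * Y)"
    by (simp only: assoc_mult_mat[OF mult_carrier_mat[OF A Xc] A Yc])
  also have "\<dots> = A * Y" using X Y by (simp add: is_pinv_def)
  finally show ?thesis .
qed

lemma is_pinv_mult_left_eq:
  assumes X: "is_pinv A X" and Y: "is_pinv A Y"
  shows "X * A = Y * A"
proof -
  obtain m n where A: "A \<in> carrier_mat m n" using carrier_mat_triv by blast
  have Xc: "X \<in> carrier_mat n m" and Yc: "Y \<in> carrier_mat n m"
    using is_pinv_carrier X Y A by blast+
  have "X * A = X * (A * Y * A)" using Y by (simp add: is_pinv_def)
  also have "\<dots> = (X * A) * (Y * A)"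
    by (simp only: assoc_mult_mat[OF A Yc A] assoc_mult_mat[OF Xc A mult_carrier_mat[OF Yc A]])
  also have "\<dots> = transpose_mat (X * A) * transpose_mat (Y * A)" using X Y by (simp add: is_pinv_def)
  also have "\<dots> = transpose_mat (Y * A * (X * A))"
    by (rule transpose_mult[symmetric]) (use A Xc Yc in auto)
  also have "\<dots> = transpose_mat (Y * (A * X * A))"
    by (simp only: assoc_mult_mat[OF Yc A mult_carrier_mat[OF Xc A]] assoc_mult_mat[OF A Xc A])
  also have "\<dots> = Y * A" using X Y by (simp add: is_pinv_def)
  finally show ?thesis .
qed

lemma pinv_unique:
  assumes X: "is_pinv A X" and Y: "is_pinv A Y"
  shows "X = Y"
proof -
  obtain m n where A: "A \<in> carrier_mat m n" using carrier_mat_triv by blast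
  have Xc: "X \<in> carrier_mat n m" and Yc: "Y \<in> carrier_mat n m"
    using is_pinv_carrier X Y A by blast+
  have "X = X * A * X" using X by (simp add: is_pinv_def)
  also have "\<dots> = Y * (A * X)" unfolding is_pinv_mult_left_eq[OF X Y] using A Xc Yc by simp
  also have "\<dots> = Y * A * Y" unfolding is_pinv_mult_right_eq[OF X Y] using A Yc by simp
  also have "\<dots> = Y" using Y by (simp add: is_pinv_def)
  finally show ?thesis .
qed

lemma is_pinv_pinv: "is_pinv A (pinv A)"
  unfolding pinv_def by (rule theI') (use pinv_exists pinv_unique in blast)

lemma pinv_carrier: "A \<in> carrier_mat m n \<Longrightarrow> pinv A \<in> carrier_mat n m"
  by (rule is_pinv_carrier[OF is_pinv_pinv])

lemma mult_pinv_mult: "A * pinv A * A = A"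
  using is_pinv_pinv by (simp add: is_pinv_def)

lemma orth_proj_mult_pinv:
  assumes A: "A \<in> carrier_mat m n"
  shows "orth_proj (A * pinv A)"
proof -
  have X: "pinv A \<in> carrier_mat n m" using pinv_carrier[OF A] .
  have "A * pinv A * (A * pinv A) = A * pinv A * A * pinv A"
    by (rule assoc_mult_mat[OF mult_carrier_mat[OF A X] A X, symmetric])
  then show ?thesis using is_pinv_pinv[of A] by (simp add: orth_proj_def is_pinv_def mult_pinv_mult)
qed

lemma row_space_mult_pinv_mult:
  assumes A: "A \<in> carrier_mat m n" and Z: "Z \<in> carrier_mat r m"
  shows "Z * A * pinv A * A = Z * A"
proof -
  have X: "pinv A \<in> carrier_mat n m" using pinv_carrier[OF A] .
  have "Z * A * pinv A * A = Z * (A * pinv A * A)"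
    using Z A X by (simp only: assoc_mult_mat[OF mult_carrier_mat[OF Z A] X A]
        assoc_mult_mat[OF Z A mult_carrier_mat[OF X A]] assoc_mult_mat[OF A X A])
  then show ?thesis by (simp only: mult_pinv_mult)
qed

section \<open>Frobenius norm estimates\<close>

lemma frob_sq_eq_sum_rows: "frob_sq M = (\<Sum>i<dim_row M. row M i \<bullet> row M i)"
  unfolding frob_sq_def scalar_prod_def by (simp add: power2_eq_square atLeast0LessThan)

lemma orth_proj_mult_vec_le:
  assumes P: "P \<in> carrier_mat m m" "orth_proj P" and z: "z \<in> carrier_vec m"
  shows "(P *\<^sub>v z) \<bullet> (P *\<^sub>v z) \<le> z \<bullet> z"
proof -
  define u where "u = P *\<^sub>v z"
  have u: "u \<in> carrier_vec m" using P z by (simp add: u_def)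
  have "transpose_mat P *\<^sub>v u = u"
    using P z by (simp add: u_def orth_proj_def flip: assoc_mult_mat_vec)
  then have uu: "u \<bullet> u = u \<bullet> z"
    using transpose_vec_mult_scalar[OF P(1) z u] by (simp add: u_def)
  have "0 \<le> (z - u) \<bullet> (z - u)" by (rule self_scalar_prod_nonneg)
  also have "\<dots> = z \<bullet> z - u \<bullet> u"
    using z u uu comm_scalar_prod[OF u z]
    by (simp add: minus_scalar_prod_distrib[of _ m] scalar_prod_minus_distrib[of _ m])
  finally show ?thesis by (simp add: u_def)
qed

lemma frob_sq_mult_orth_proj_le:
  assumes Z: "Z \<in> carrier_mat r m" and P: "P \<in> carrier_mat m m" "orth_proj P"
  shows "frob_sq (Z * P) \<le> frob_sq Z"
proof -
  have row_ZP: "row (Z * P) i = P *\<^sub>v row Z i" if "i < r" for i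
  proof (rule eq_vecI)
    fix j assume "j < dim_vec (P *\<^sub>v row Z i)"
    then have j: "j < m" using P by simp
    have "col P j = row P j" using P j row_transpose[of j P] by (simp add: orth_proj_def)
    then show "row (Z * P) i $ j = (P *\<^sub>v row Z i) $ j"
      using Z P j that comm_scalar_prod[of "row Z i" m "row P j"] by simp
  qed (use Z P in simp)
  have "frob_sq (Z * P) = (\<Sum>i<r. row (Z * P) i \<bullet> row (Z * P) i)"
    using Z P by (simp add: frob_sq_eq_sum_rows del: row_mult)
  also have "\<dots> = (\<Sum>i<r. (P *\<^sub>v row Z i) \<bullet> (P *\<^sub>v row Z i))"
    by (intro sum.cong refl) (simp add: row_ZP del: row_mult)
  also have "\<dots> \<le> (\<Sum>i<r. row Z i \<bullet> row Z i)"
    using Z P by (intro sum_mono orth_proj_mult_vec_le) auto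
  also have "\<dots> = frob_sq Z" using Z by (simp add: frob_sq_eq_sum_rows)
  finally show ?thesis .
qed

text \<open>Minimum-norm property: \<open>W * pinv A\<close> has the least Frobenius norm among all solutions
  \<open>Y\<close> of \<open>Y * A = W\<close>, here \<open>W = Z * A\<close>.\<close>
lemma frob_sq_mult_pinv_le:
  assumes A: "A \<in> carrier_mat m n" and Z: "Z \<in> carrier_mat r m"
  shows "frob_sq (Z * A * pinv A) \<le> frob_sq Z"
proof -
  have "Z * A * pinv A = Z * (A * pinv A)" using assoc_mult_mat[OF Z A pinv_carrier[OF A]] .
  then show ?thesis
    using frob_sq_mult_orth_proj_le[OF Z _ orth_proj_mult_pinv[OF A]] A pinv_carrier[OF A] by simp
qed

lemma frob_sq_mult_disjoint_support_le:
  assumes Z: "Z \<in> carrier_mat r k" and D: "D \<in> carrier_mat k k'"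
    and disjoint: "\<And>t1 t2 t'. t1 < k \<Longrightarrow> t2 < k \<Longrightarrow> t' < k' \<Longrightarrow>
      D $$ (t1, t') \<noteq> 0 \<Longrightarrow> D $$ (t2, t') \<noteq> 0 \<Longrightarrow> t1 = t2"
    and rows_le: "\<And>t. t < k \<Longrightarrow> (\<Sum>t'<k'. (D $$ (t, t'))\<^sup>2) \<le> 1"
  shows "frob_sq (Z * D) \<le> frob_sq Z"
proof -
  have entry_sq: "((Z * D) $$ (i, t'))\<^sup>2 = (\<Sum>t<k. (Z $$ (i, t))\<^sup>2 * (D $$ (t, t'))\<^sup>2)"
    if i: "i < r" and t': "t' < k'" for i t'
  proof -
    have entry: "(Z * D) $$ (i, t') = (\<Sum>t<k. Z $$ (i, t) * D $$ (t, t'))"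
      using Z D i t' by (simp add: scalar_prod_def atLeast0LessThan)
    show ?thesis
    proof (cases "\<exists>t0<k. D $$ (t0, t') \<noteq> 0")
      case True
      then obtain t0 where t0: "t0 < k" "D $$ (t0, t') \<noteq> 0" by blast
      then have zero: "D $$ (t, t') = 0" if "t < k" "t \<noteq> t0" for t
        using disjoint[OF that(1) t0(1) t'] that(2) by blast
      have "(\<Sum>t<k. Z $$ (i, t) * D $$ (t, t')) = Z $$ (i, t0) * D $$ (t0, t')"
        "(\<Sum>t<k. (Z $$ (i, t))\<^sup>2 * (D $$ (t, t'))\<^sup>2) = (Z $$ (i, t0))\<^sup>2 * (D $$ (t0, t'))\<^sup>2"
        using t0 zero by (subst sum.mono_neutral_right[of "{..<k}" "{t0}"]; auto)+
      then show ?thesis using entry by (simp add: power_mult_distrib)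
    qed (use entry in simp)
  qed
  have "frob_sq (Z * D) = (\<Sum>i<r. \<Sum>t'<k'. ((Z * D) $$ (i, t'))\<^sup>2)"
    using Z D by (simp del: index_mult_mat add: frob_sq_def index_mult_mat(2,3))
  also have "\<dots> = (\<Sum>i<r. \<Sum>t'<k'. \<Sum>t<k. (Z $$ (i, t))\<^sup>2 * (D $$ (t, t'))\<^sup>2)"
    by (intro sum.cong refl) (simp add: entry_sq)
  also have "\<dots> = (\<Sum>i<r. \<Sum>t<k. (Z $$ (i, t))\<^sup>2 * (\<Sum>t'<k'. (D $$ (t, t'))\<^sup>2))"
    by (simp add: sum_distrib_left sum.swap[of _ "{..<k'}"])
  also have "\<dots> \<le> (\<Sum>i<r. \<Sum>t<k. (Z $$ (i, t))\<^sup>2)"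
    by (intro sum_mono mult_left_le rows_le) auto
  also have "\<dots> = frob_sq Z" using Z by (simp add: frob_sq_def)
  finally show ?thesis .
qed

lemma frob_sq_mult_empty: "X \<in> carrier_mat 0 k \<Longrightarrow> frob_sq (W * X) = 0"
  by (simp add: frob_sq_def scalar_prod_def)

section \<open>The joint strategy of the waterfilling mechanism\<close>

lemma sum_nth_distinct: "distinct xs \<Longrightarrow> (\<Sum>t<length xs. g (xs ! t)) = (\<Sum>x\<in>set xs. g x)"
  using sum.reindex_bij_betw[OF bij_betw_nth[OF _ refl refl], of xs g] by (simp add: atLeast0LessThan)

lemma mult_mat_of_rows_scaled:
  fixes es :: "real vec list"
  assumes es: "distinct es" "set es \<subseteq> carrier_vec n" and w: "\<And>e. e \<in> set es \<Longrightarrow> w e \<noteq> 0"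
    and M: "M \<in> carrier_mat k n" and rows: "\<And>r. r < k \<Longrightarrow> row M r = a r \<cdot>\<^sub>v b r"
    and mem: "\<And>r. r < k \<Longrightarrow> a r \<noteq> 0 \<Longrightarrow> b r \<in> set es"
  shows "mat k (length es) (\<lambda>(r, t). if es ! t = b r then a r / w (b r) else 0)
           * mat_of_rows n (map (\<lambda>e. w e \<cdot>\<^sub>v e) es) = M"
proof (rule eq_matI)
  fix r c assume "r < dim_row M" "c < dim_col M"
  then have r: "r < k" and c: "c < n" using M by auto
  have b: "b r \<in> carrier_vec n"
    using arg_cong[OF rows[OF r], of dim_vec] M r by (intro carrier_vecI) simp
  have "(mat k (length es) (\<lambda>(r, t). if es ! t = b r then a r / w (b r) else 0)
           * mat_of_rows n (map (\<lambda>e. w e \<cdot>\<^sub>v e) es)) $$ (r, c)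
      = (\<Sum>t<length es. if es ! t = b r then a r / w (b r) * (w (b r) * b r $ c) else 0)"
    using r c b es(2) by (auto simp: scalar_prod_def mat_of_rows_index atLeast0LessThan intro!: sum.cong)
  also have "\<dots> = (\<Sum>e\<in>set es. if e = b r then a r / w (b r) * (w (b r) * b r $ c) else 0)"
    by (rule sum_nth_distinct[OF es(1)])
  also have "\<dots> = M $$ (r, c)"
    using w[of "b r"] mem[OF r] arg_cong[OF rows[OF r], of "\<lambda>v. v $ c"] M r c b
    by (cases "b r \<in> set es") auto
  finally show "(mat k (length es) (\<lambda>(r, t). if es ! t = b r then a r / w (b r) else 0)
           * mat_of_rows n (map (\<lambda>e. w e \<cdot>\<^sub>v e) es)) $$ (r, c) = M $$ (r, c)" .
qed (use M in auto)

lemma is_row_norm_nonneg: "is_row_norm n N \<Longrightarrow> v \<in> carrier_vec n \<Longrightarrow> 0 \<le> N v"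
  unfolding is_row_norm_def by blast

lemma is_row_norm_eq_0_iff: "is_row_norm n N \<Longrightarrow> v \<in> carrier_vec n \<Longrightarrow> N v = 0 \<longleftrightarrow> v = 0\<^sub>v n"
  unfolding is_row_norm_def by blast

lemma wf_rows_mono: "S \<subseteq> T \<Longrightarrow> wf_rows s A S \<subseteq> wf_rows s A T"
  unfolding wf_rows_def by blast

lemma wf_buckets_mono: "S \<subseteq> T \<Longrightarrow> wf_buckets N s A S \<subseteq> wf_buckets N s A T"
  unfolding wf_buckets_def by (intro image_mono wf_rows_mono)

lemma dim_col_joint_strategy: "dim_col (joint_strategy n N s A S) = n"
  by (simp add: joint_strategy_def Let_def)

locale waterfilling =
  fixes n :: nat and N :: "real vec \<Rightarrow> real" and s :: "'a \<Rightarrow> real"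
    and A :: "'a \<Rightarrow> real mat" and U :: "'a set"
  assumes norm: "is_row_norm n N" and finite_U: "finite U"
    and A_dim: "\<And>l. l \<in> U \<Longrightarrow> dim_col (A l) = n"
    and s_pos: "\<And>l. l \<in> U \<Longrightarrow> 0 < s l"
    and A_cols: "\<And>l c. l \<in> U \<Longrightarrow> c < n \<Longrightarrow> col_L1 (A l) c = 1"
begin

lemma wf_vec_carrier: "l \<in> U \<Longrightarrow> wf_vec s A (l, r) \<in> carrier_vec n"
  unfolding wf_vec_def by (intro carrier_vecI) (simp add: A_dim)

lemma wf_dir_carrier: "l \<in> U \<Longrightarrow> wf_dir N s A (l, r) \<in> carrier_vec n"
  unfolding wf_dir_def by (simp add: wf_vec_carrier)

lemma wf_vec_index:
  "l \<in> U \<Longrightarrow> r < dim_row (A l) \<Longrightarrow> c < n \<Longrightarrow> wf_vec s A (l, r) $ c = s l * A l $$ (r, c)"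
  unfolding wf_vec_def by (simp add: A_dim)

lemma wf_rowsE:
  assumes "S \<subseteq> U" "p \<in> wf_rows s A S"
  obtains l r where "p = (l, r)" "l \<in> S" "l \<in> U" "r < dim_row (A l)" "wf_vec s A p \<noteq> 0\<^sub>v n"
proof -
  from assms(2) obtain l r where p: "p = (l, r)" "l \<in> S" "r < dim_row (A l)"
    and nz: "row (s l \<cdot>\<^sub>m A l) r \<noteq> 0\<^sub>v (dim_col (A l))" unfolding wf_rows_def by blast
  have "l \<in> U" using p(2) assms(1) by blast
  then show thesis using that[OF p(1,2) \<open>l \<in> U\<close> p(3)] nz by (simp add: wf_vec_def p(1) A_dim)
qed

lemma norm_wf_vec_pos:
  assumes "S \<subseteq> U" "p \<in> wf_rows s A S"
  shows "0 < N (wf_vec s A p)"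
proof -
  obtain l r where p: "p = (l, r)" "l \<in> U" "wf_vec s A p \<noteq> 0\<^sub>v n" using wf_rowsE[OF assms] by metis
  then have "wf_vec s A p \<in> carrier_vec n" using wf_vec_carrier by simp
  then show ?thesis
    using p(3) is_row_norm_nonneg[OF norm] is_row_norm_eq_0_iff[OF norm] by (simp add: less_le)
qed

lemma finite_wf_rows: "S \<subseteq> U \<Longrightarrow> finite (wf_rows s A S)"
  by (rule finite_subset[of _ "SIGMA l:U. {..<dim_row (A l)}"]) (auto simp: wf_rows_def finite_U)

lemma finite_wf_buckets: "S \<subseteq> U \<Longrightarrow> finite (wf_buckets N s A S)"
  unfolding wf_buckets_def by (intro finite_imageI finite_wf_rows)

lemma wf_dir_index:
  assumes "S \<subseteq> U" "p \<in> wf_rows s A S" "c < n"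
  shows "wf_dir N s A p $ c = wf_vec s A p $ c / N (wf_vec s A p)"
proof -
  obtain l r where "p = (l, r)" "l \<in> U" using wf_rowsE[OF assms(1,2)] by metis
  then have "wf_vec s A p \<in> carrier_vec n" using wf_vec_carrier by simp
  then show ?thesis using assms(3) by (simp add: wf_dir_def)
qed

lemma wf_buckets_carrier:
  assumes "S \<subseteq> U" "e \<in> wf_buckets N s A S"
  shows "e \<in> carrier_vec n"
proof -
  obtain p where p: "p \<in> wf_rows s A S" "e = wf_dir N s A p" using assms(2) by (auto simp: wf_buckets_def)
  then obtain l r where "p = (l, r)" "l \<in> U" using wf_rowsE[OF assms(1)] by metis
  then show ?thesis using p wf_dir_carrier by simp
qed

lemma wf_weight_pos: "S \<subseteq> U \<Longrightarrow> e \<in> wf_buckets N s A S \<Longrightarrow> 0 < wf_weight N s A S e"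
  unfolding wf_weight_def wf_buckets_def
  by (intro sum_pos) (auto simp: finite_wf_rows norm_wf_vec_pos)

lemma wf_weight_mono:
  assumes "S \<subseteq> T" "T \<subseteq> U"
  shows "wf_weight N s A S e \<le> wf_weight N s A T e"
  unfolding wf_weight_def
proof (rule sum_mono2)
  show "finite {p \<in> wf_rows s A T. wf_dir N s A p = e}" using finite_wf_rows[OF assms(2)] by simp
  show "{p \<in> wf_rows s A S. wf_dir N s A p = e} \<subseteq> {p \<in> wf_rows s A T. wf_dir N s A p = e}"
    using wf_rows_mono[OF assms(1)] by blast
qed (use norm_wf_vec_pos[OF assms(2)] in \<open>auto intro: less_imp_le\<close>)

lemma joint_strategy_eq:
  assumes "S \<subseteq> U"
  obtains es where "distinct es" "set es = wf_buckets N s A S"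
    "joint_strategy n N s A S = mat_of_rows n (map (\<lambda>e. wf_weight N s A S e \<cdot>\<^sub>v e) es)"
proof -
  have "\<exists>es. distinct es \<and> set es = wf_buckets N s A S"
    using finite_distinct_list[OF finite_wf_buckets[OF assms]] by blast
  from someI_ex[OF this] show ?thesis by (intro that) (auto simp: joint_strategy_def Let_def)
qed

lemma sum_wf_rows_abs:
  assumes S: "S \<subseteq> U" and c: "c < n"
  shows "(\<Sum>p\<in>wf_rows s A S. \<bar>wf_vec s A p $ c\<bar>) = (\<Sum>l\<in>S. s l)"
proof -
  have fin: "finite (SIGMA l:S. {..<dim_row (A l)})"
    using S finite_U by (auto intro: finite_subset)
  have "(\<Sum>p\<in>wf_rows s A S. \<bar>wf_vec s A p $ c\<bar>) = (\<Sum>p\<in>(SIGMA l:S. {..<dim_row (A l)}). \<bar>wf_vec s A p $ c\<bar>)"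
    using S c A_dim
    by (intro sum.mono_neutral_left fin) (auto simp: wf_rows_def wf_vec_def dest!: arg_cong[of _ _ "\<lambda>v. v $ c"])
  also have "\<dots> = (\<Sum>l\<in>S. \<Sum>r<dim_row (A l). \<bar>wf_vec s A (l, r) $ c\<bar>)"
    using S finite_U by (subst sum.Sigma) (auto intro: finite_subset)
  also have "\<dots> = (\<Sum>l\<in>S. s l * col_L1 (A l) c)"
  proof (rule sum.cong)
    fix l assume "l \<in> S"
    then have "l \<in> U" using S by blast
    then show "(\<Sum>r<dim_row (A l). \<bar>wf_vec s A (l, r) $ c\<bar>) = s l * col_L1 (A l) c"
      using c s_pos[of l] by (simp add: col_L1_def wf_vec_index abs_mult sum_distrib_left)
  qed simp
  also have "\<dots> = (\<Sum>l\<in>S. s l)" using S c A_cols by (intro sum.cong) auto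
  finally show ?thesis .
qed

lemma wf_weight_mult_abs_index:
  assumes S: "S \<subseteq> U" and e: "e \<in> wf_buckets N s A S" and c: "c < n"
  shows "wf_weight N s A S e * \<bar>e $ c\<bar> = (\<Sum>p\<in>{p \<in> wf_rows s A S. wf_dir N s A p = e}. \<bar>wf_vec s A p $ c\<bar>)"
  unfolding wf_weight_def sum_distrib_right
proof (intro sum.cong refl)
  fix p assume "p \<in> {p \<in> wf_rows s A S. wf_dir N s A p = e}"
  then have p: "p \<in> wf_rows s A S" "e = wf_dir N s A p" by auto
  show "N (wf_vec s A p) * \<bar>e $ c\<bar> = \<bar>wf_vec s A p $ c\<bar>"
    using norm_wf_vec_pos[OF S p(1)] by (simp add: p(2) wf_dir_index[OF S p(1) c] abs_divide)
qed

lemma col_L1_joint_strategy: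
  assumes S: "S \<subseteq> U" and c: "c < n"
  shows "col_L1 (joint_strategy n N s A S) c = (\<Sum>l\<in>S. s l)"
proof -
  let ?w = "wf_weight N s A S"
  obtain es where es: "distinct es" "set es = wf_buckets N s A S"
    and J: "joint_strategy n N s A S = mat_of_rows n (map (\<lambda>e. ?w e \<cdot>\<^sub>v e) es)"
    using joint_strategy_eq[OF S] .
  have "col_L1 (joint_strategy n N s A S) c = (\<Sum>t<length es. ?w (es ! t) * \<bar>es ! t $ c\<bar>)"
    unfolding J col_L1_def
  proof (rule sum.cong)
    fix t assume "t \<in> {..<length es}"
    then have t: "t < length es" by simp
    then have e: "es ! t \<in> wf_buckets N s A S" using es(2) nth_mem by blast
    then show "\<bar>mat_of_rows n (map (\<lambda>e. ?w e \<cdot>\<^sub>v e) es) $$ (t, c)\<bar> = ?w (es ! t) * \<bar>es ! t $ c\<bar>"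
      using t c wf_buckets_carrier[OF S e] wf_weight_pos[OF S e]
      by (simp add: mat_of_rows_index abs_mult)
  qed simp
  also have "\<dots> = (\<Sum>e\<in>wf_buckets N s A S. ?w e * \<bar>e $ c\<bar>)"
    using sum_nth_distinct[OF es(1)] es(2) by simp
  also have "\<dots> = (\<Sum>p\<in>wf_rows s A S. \<bar>wf_vec s A p $ c\<bar>)"
    using sum.image_gen[OF finite_wf_rows[OF S], of "\<lambda>p. \<bar>wf_vec s A p $ c\<bar>" "wf_dir N s A"]
    by (simp add: wf_weight_mult_abs_index[OF S _ c] wf_buckets_def)
  also have "\<dots> = (\<Sum>l\<in>S. s l)" by (rule sum_wf_rows_abs[OF S c])
  finally show ?thesis .
qed

lemma L1_sens_joint_strategy:
  assumes "S \<subseteq> U" "0 < n"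
  shows "L1_sens (joint_strategy n N s A S) = (\<Sum>l\<in>S. s l)"
proof -
  have "{col_L1 (joint_strategy n N s A S) c | c. c < dim_col (joint_strategy n N s A S)} = {\<Sum>l\<in>S. s l}"
    using col_L1_joint_strategy[OF assms(1)] assms(2)
    by (auto simp: dim_col_joint_strategy intro!: exI[of _ 0])
  then show ?thesis by (simp add: L1_sens_def)
qed

lemma factor_through_joint_strategy:
  assumes S: "S \<subseteq> U" and M: "M \<in> carrier_mat k n"
    and rows: "\<And>r. r < k \<Longrightarrow> row M r = a r \<cdot>\<^sub>v b r"
    and buckets: "\<And>r. r < k \<Longrightarrow> a r \<noteq> 0 \<Longrightarrow> b r \<in> wf_buckets N s A S"
  obtains C where "C \<in> carrier_mat k (dim_row (joint_strategy n N s A S))"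
    "C * joint_strategy n N s A S = M"
    "\<And>r1 r2 t. r1 < k \<Longrightarrow> r2 < k \<Longrightarrow> t < dim_row (joint_strategy n N s A S) \<Longrightarrow>
       C $$ (r1, t) \<noteq> 0 \<Longrightarrow> C $$ (r2, t) \<noteq> 0 \<Longrightarrow> b r1 = b r2"
    "\<And>r. r < k \<Longrightarrow>
       (\<Sum>t<dim_row (joint_strategy n N s A S). (C $$ (r, t))\<^sup>2) = (a r / wf_weight N s A S (b r))\<^sup>2"
proof -
  let ?B = "wf_buckets N s A S" and ?w = "wf_weight N s A S"
  obtain es where es: "distinct es" "set es = ?B"
    and J: "joint_strategy n N s A S = mat_of_rows n (map (\<lambda>e. ?w e \<cdot>\<^sub>v e) es)"
    using joint_strategy_eq[OF S] .
  define C where "C = mat k (length es) (\<lambda>(r, t). if es ! t = b r then a r / ?w (b r) else 0)"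
  have C: "C \<in> carrier_mat k (dim_row (joint_strategy n N s A S))" by (simp add: C_def J)
  have CJ: "C * joint_strategy n N s A S = M"
    unfolding C_def J
  proof (rule mult_mat_of_rows_scaled[OF es(1) _ _ M rows])
    show "set es \<subseteq> carrier_vec n" using es(2) wf_buckets_carrier[OF S] by blast
    show "?w e \<noteq> 0" if "e \<in> set es" for e using wf_weight_pos[OF S, of e] that es(2) by simp
    show "b r \<in> set es" if "r < k" "a r \<noteq> 0" for r using buckets that es(2) by simp
  qed
  have disjoint: "b r1 = b r2"
    if "r1 < k" "r2 < k" "t < dim_row (joint_strategy n N s A S)" "C $$ (r1, t) \<noteq> 0" "C $$ (r2, t) \<noteq> 0"
    for r1 r2 t
    using that by (auto simp: C_def J split: if_splits)
  have row_norm: "(\<Sum>t<dim_row (joint_strategy n N s A S). (C $$ (r, t))\<^sup>2) = (a r / ?w (b r))\<^sup>2"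
    if r: "r < k" for r
  proof -
    have "(\<Sum>t<dim_row (joint_strategy n N s A S). (C $$ (r, t))\<^sup>2)
        = (\<Sum>t<length es. if es ! t = b r then (a r / ?w (b r))\<^sup>2 else 0)"
      using r by (auto simp: C_def J intro!: sum.cong)
    also have "\<dots> = (\<Sum>e\<in>?B. if e = b r then (a r / ?w (b r))\<^sup>2 else 0)"
      using sum_nth_distinct[OF es(1)] es(2) by simp
    also have "\<dots> = (a r / ?w (b r))\<^sup>2"
      using finite_wf_buckets[OF S] buckets[OF r] by (cases "b r \<in> ?B") auto
    finally show ?thesis .
  qed
  show ?thesis by (rule that[OF C CJ]) (use disjoint row_norm in blast)+
qed

lemma strategy_factors_through_joint:
  assumes S: "S \<subseteq> U" and l: "l \<in> S"
  obtains C where "C \<in> carrier_mat (dim_row (A l)) (dim_row (joint_strategy n N s A S))"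
    "C * joint_strategy n N s A S = A l"
proof (rule factor_through_joint_strategy[OF S])
  have lU: "l \<in> U" using S l by blast
  show "A l \<in> carrier_mat (dim_row (A l)) n" using A_dim[OF lU] by (intro carrier_matI) simp_all
  define v where "v r = wf_vec s A (l, r)" for r
  have v: "v r \<in> carrier_vec n" for r using wf_vec_carrier[OF lU] by (simp add: v_def)
  show "row (A l) r = (N (v r) / s l) \<cdot>\<^sub>v wf_dir N s A (l, r)" if "r < dim_row (A l)" for r
  proof (cases "v r = 0\<^sub>v n")
    case True
    have "row (A l) r = 0\<^sub>v n"
    proof (rule eq_vecI)
      fix c assume "c < dim_vec (0\<^sub>v n :: real vec)"
      then have c: "c < n" by simp
      then have "s l * A l $$ (r, c) = 0"
        using arg_cong[OF True, of "\<lambda>x. x $ c"] wf_vec_index[OF lU that c] by (simp add: v_def)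
      then show "row (A l) r $ c = 0\<^sub>v n $ c" using s_pos[OF lU] that c A_dim[OF lU] by simp
    qed (simp add: A_dim[OF lU])
    moreover have "N (v r) = 0" using True is_row_norm_eq_0_iff[OF norm v] by blast
    ultimately show ?thesis using True by (intro eq_vecI) (simp_all add: wf_dir_def v_def[symmetric])
  next
    case False
    then have "N (v r) \<noteq> 0" using is_row_norm_eq_0_iff[OF norm v] by blast
    moreover have "wf_dir N s A (l, r) $ c = s l * A l $$ (r, c) / N (v r)" if "c < n" for c
      using \<open>r < dim_row (A l)\<close> that carrier_vecD[OF v[of r]] wf_vec_index[OF lU]
      by (simp add: wf_dir_def v_def)
    ultimately show ?thesis
      using s_pos[OF lU] that A_dim[OF lU] carrier_vecD[OF wf_dir_carrier[OF lU]] by (intro eq_vecI) auto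
  qed
  show "wf_dir N s A (l, r) \<in> wf_buckets N s A S" if "r < dim_row (A l)" "N (v r) / s l \<noteq> 0" for r
  proof -
    have "v r \<noteq> 0\<^sub>v n" using that(2) is_row_norm_eq_0_iff[OF norm v] by auto
    then have "(l, r) \<in> wf_rows s A S" using l that(1) A_dim[OF lU] by (simp add: wf_rows_def v_def wf_vec_def)
    then show ?thesis by (simp add: wf_buckets_def)
  qed
qed (rule that)

lemma joint_strategy_contraction:
  assumes ST: "S \<subseteq> T" and T: "T \<subseteq> U"
  obtains D where "D \<in> carrier_mat (dim_row (joint_strategy n N s A S)) (dim_row (joint_strategy n N s A T))"
    "D * joint_strategy n N s A T = joint_strategy n N s A S"
    "\<And>t1 t2 t'. t1 < dim_row (joint_strategy n N s A S) \<Longrightarrow> t2 < dim_row (joint_strategy n N s A S) \<Longrightarrow>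
       t' < dim_row (joint_strategy n N s A T) \<Longrightarrow> D $$ (t1, t') \<noteq> 0 \<Longrightarrow> D $$ (t2, t') \<noteq> 0 \<Longrightarrow> t1 = t2"
    "\<And>t. t < dim_row (joint_strategy n N s A S) \<Longrightarrow>
       (\<Sum>t'<dim_row (joint_strategy n N s A T). (D $$ (t, t'))\<^sup>2) \<le> 1"
proof -
  have S: "S \<subseteq> U" using ST T by blast
  obtain es where es: "distinct es" "set es = wf_buckets N s A S"
    and J: "joint_strategy n N s A S = mat_of_rows n (map (\<lambda>e. wf_weight N s A S e \<cdot>\<^sub>v e) es)"
    using joint_strategy_eq[OF S] .
  have es_B: "es ! t \<in> wf_buckets N s A S" if "t < length es" for t using nth_mem[OF that] es(2) by simp
  have J_carrier: "joint_strategy n N s A S \<in> carrier_mat (length es) n" unfolding J by (intro carrier_matI) simp_all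
  have J_row: "row (joint_strategy n N s A S) t = wf_weight N s A S (es ! t) \<cdot>\<^sub>v es ! t"
    if "t < length es" for t
    using that wf_buckets_carrier[OF S es_B[OF that]] by (simp add: J)
  obtain D where D: "D \<in> carrier_mat (length es) (dim_row (joint_strategy n N s A T))"
    and DJ: "D * joint_strategy n N s A T = joint_strategy n N s A S"
    and disjoint: "\<And>t1 t2 t'. t1 < length es \<Longrightarrow> t2 < length es \<Longrightarrow> t' < dim_row (joint_strategy n N s A T) \<Longrightarrow>
       D $$ (t1, t') \<noteq> 0 \<Longrightarrow> D $$ (t2, t') \<noteq> 0 \<Longrightarrow> es ! t1 = es ! t2"
    and row_norm: "\<And>t. t < length es \<Longrightarrow> (\<Sum>t'<dim_row (joint_strategy n N s A T). (D $$ (t, t'))\<^sup>2)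
       = (wf_weight N s A S (es ! t) / wf_weight N s A T (es ! t))\<^sup>2"
    using factor_through_joint_strategy[OF T J_carrier J_row] es_B wf_buckets_mono[OF ST] by blast
  show ?thesis
  proof (rule that)
    show "D \<in> carrier_mat (dim_row (joint_strategy n N s A S)) (dim_row (joint_strategy n N s A T))"
      using D by (simp add: J)
    show "t1 = t2" if "t1 < dim_row (joint_strategy n N s A S)" "t2 < dim_row (joint_strategy n N s A S)"
      "t' < dim_row (joint_strategy n N s A T)" "D $$ (t1, t') \<noteq> 0" "D $$ (t2, t') \<noteq> 0" for t1 t2 t'
      using disjoint[of t1 t2 t'] that es(1) by (simp add: J nth_eq_iff_index_eq)
    show "(\<Sum>t'<dim_row (joint_strategy n N s A T). (D $$ (t, t'))\<^sup>2) \<le> 1"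
      if "t < dim_row (joint_strategy n N s A S)" for t
    proof -
      have t: "t < length es" using that by (simp add: J)
      have "0 < wf_weight N s A S (es ! t)" "wf_weight N s A S (es ! t) \<le> wf_weight N s A T (es ! t)"
        using wf_weight_pos[OF S es_B[OF t]] wf_weight_mono[OF ST T] by auto
      then show ?thesis by (simp add: row_norm[OF t] power_le_one)
    qed
  qed (rule DJ)
qed

lemma wf_err_eq:
  assumes "S \<subseteq> U" "S \<noteq> {}" "0 < n"
  shows "wf_err n N \<epsilon> s W A S i = 2 / \<epsilon>\<^sup>2 * frob_sq (W i * pinv (joint_strategy n N s A S))"
proof -
  have "0 < (\<Sum>l\<in>S. s l)"
    using assms(1,2) finite_U s_pos by (intro sum_pos) (auto intro: finite_subset)
  then show ?thesis
    using L1_sens_joint_strategy[OF assms(1,3)] by (simp add: wf_err_def power_mult_distrib)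
qed

lemma frob_sq_mult_pinv_joint_strategy_mono:
  assumes ST: "S \<subseteq> T" and T: "T \<subseteq> U"
    and Z: "Z \<in> carrier_mat r (dim_row (joint_strategy n N s A S))"
  defines "W \<equiv> Z * joint_strategy n N s A S"
  shows "frob_sq (W * pinv (joint_strategy n N s A T)) \<le> frob_sq (W * pinv (joint_strategy n N s A S))"
proof -
  define JS JT where "JS = joint_strategy n N s A S" and "JT = joint_strategy n N s A T"
  have JS: "JS \<in> carrier_mat (dim_row JS) n" and JT: "JT \<in> carrier_mat (dim_row JT) n"
    unfolding JS_def JT_def by (intro carrier_matI; simp add: dim_col_joint_strategy)+
  obtain D where D: "D \<in> carrier_mat (dim_row JS) (dim_row JT)" and DJ: "D * JT = JS"
    and disjoint: "\<And>t1 t2 t'. t1 < dim_row JS \<Longrightarrow> t2 < dim_row JS \<Longrightarrow> t' < dim_row JT \<Longrightarrow>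
      D $$ (t1, t') \<noteq> 0 \<Longrightarrow> D $$ (t2, t') \<noteq> 0 \<Longrightarrow> t1 = t2"
    and row_norm: "\<And>t. t < dim_row JS \<Longrightarrow> (\<Sum>t'<dim_row JT. (D $$ (t, t'))\<^sup>2) \<le> 1"
    using joint_strategy_contraction[OF ST T, folded JS_def JT_def] by blast
  have Z: "Z \<in> carrier_mat r (dim_row JS)" using Z by (simp add: JS_def)
  define Y where "Y = W * pinv JS"
  have Y: "Y \<in> carrier_mat r (dim_row JS)"
    unfolding Y_def W_def JS_def[symmetric] by (rule mult_carrier_mat[OF mult_carrier_mat[OF Z JS] pinv_carrier[OF JS]])
  have "Y * D * JT = Y * JS" using assoc_mult_mat[OF Y D JT] by (simp add: DJ)
  also have "\<dots> = W" using row_space_mult_pinv_mult[OF JS Z] by (simp add: Y_def W_def JS_def)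
  finally have W_Y: "Y * D * JT = W" .
  have "frob_sq (W * pinv JT) \<le> frob_sq (Y * D)"
    using frob_sq_mult_pinv_le[OF JT mult_carrier_mat[OF Y D]] unfolding W_Y .
  also have "\<dots> \<le> frob_sq Y"
    by (rule frob_sq_mult_disjoint_support_le[OF Y D disjoint row_norm])
  finally show ?thesis by (simp add: Y_def JS_def JT_def)
qed

lemma wf_err_mono:
  assumes ST: "S \<subseteq> T" and T: "T \<subseteq> U" and i: "i \<in> S"
    and W_dim: "dim_col (W i) = n" and W_span: "W i = W i * pinv (A i) * A i"
  shows "wf_err n N \<epsilon> s W A T i \<le> wf_err n N \<epsilon> s W A S i"
proof (cases "n = 0")
  case True
  \<comment> \<open>Here \<open>L1_sens\<close> is the junk value \<open>Max {}\<close>, but the pseudo-inverses have no rows.\<close>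
  have "frob_sq (W i * pinv (joint_strategy n N s A R)) = 0" for R
  proof (intro frob_sq_mult_empty pinv_carrier carrier_matI)
    show "dim_col (joint_strategy n N s A R) = 0" using True by (simp add: dim_col_joint_strategy)
  qed simp
  then show ?thesis by (simp add: wf_err_def Let_def)
next
  case False
  have S: "S \<subseteq> U" using ST T by blast
  define JS where "JS = joint_strategy n N s A S"
  have JS: "JS \<in> carrier_mat (dim_row JS) n" unfolding JS_def by (intro carrier_matI) (simp_all add: dim_col_joint_strategy)
  have Wi: "W i \<in> carrier_mat (dim_row (W i)) n" using W_dim by (intro carrier_matI) simp_all
  have Ai: "A i \<in> carrier_mat (dim_row (A i)) n" using A_dim i S by (intro carrier_matI) auto
  obtain C where C: "C \<in> carrier_mat (dim_row (A i)) (dim_row JS)" and CJ: "C * JS = A i"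
    by (rule strategy_factors_through_joint[OF S i, folded JS_def])
  define Z where "Z = W i * pinv (A i) * C"
  have Z: "Z \<in> carrier_mat (dim_row (W i)) (dim_row JS)"
    unfolding Z_def by (rule mult_carrier_mat[OF mult_carrier_mat[OF Wi pinv_carrier[OF Ai]] C])
  have "W i * pinv (A i) * A i = Z * JS"
    using assoc_mult_mat[OF mult_carrier_mat[OF Wi pinv_carrier[OF Ai]] C JS] by (simp add: Z_def CJ)
  with W_span have "W i = Z * JS" by (rule trans)
  then have "frob_sq (W i * pinv (joint_strategy n N s A T)) \<le> frob_sq (W i * pinv JS)"
    using frob_sq_mult_pinv_joint_strategy_mono[OF ST T Z[unfolded JS_def]] by (simp add: JS_def)
  moreover have "S \<noteq> {}" "T \<noteq> {}" "0 < n" using i ST False by auto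
  ultimately show ?thesis
    unfolding wf_err_eq[OF S \<open>S \<noteq> {}\<close> \<open>0 < n\<close>] wf_err_eq[OF T \<open>T \<noteq> {}\<close> \<open>0 < n\<close>]
    by (intro mult_left_mono) (auto simp: JS_def)
qed

end

theorem mainTheorem1:
  fixes n :: nat and N :: "real vec \<Rightarrow> real" and \<epsilon> :: real
    and s :: "'a \<Rightarrow> real" and W A :: "'a \<Rightarrow> real mat"
    and S :: "'a set" and i j :: 'a
  assumes norm: "is_row_norm n N"
    and eps: "\<epsilon> > 0"
    and finS: "finite S" and neS: "S \<noteq> {}" and jS: "j \<notin> S"
    and W_dim: "\<And>l. l \<in> insert j S \<Longrightarrow> dim_col (W l) = n"
    and A_dim: "\<And>l. l \<in> insert j S \<Longrightarrow> dim_col (A l) = n"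
    and s_pos: "\<And>l. l \<in> insert j S \<Longrightarrow> s l > 0"
    and W_span: "\<And>l. l \<in> insert j S \<Longrightarrow> W l = W l * pinv (A l) * A l"
    and A_cols: "\<And>l c. l \<in> insert j S \<Longrightarrow> c < n \<Longrightarrow> col_L1 (A l) c = 1"
    and iS: "i \<in> S"
  shows "wf_err n N \<epsilon> s W A (insert j S) i \<le> wf_err n N \<epsilon> s W A S i"
proof -
  interpret waterfilling n N s A "insert j S"
    using norm finS A_dim s_pos A_cols by unfold_locales auto
  show ?thesis using iS W_dim W_span by (intro wf_err_mono) auto
qed

end
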